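(* Let $n\in\mathbb N\cup\{\omega\}$ and let $F\colon C\to D$ be a Conduché $n$-prefunctor between $n$-precategories. If $F(u)=1_v$ for some $k<n$, $u\in C_{k+1}$ and $v\in D_k$, then there exists a unique $u'\in C_k$ such that $F(u')=v$ and $u=1_{u'}$.
   Context: An $n$-precategory is an $n$-globular set $C$ (sets $C_k$, $k\le n$, with $s_i,t_i\colon C_{i+1}\to C_i$ satisfying $s_is_{i+1}=s_it_{i+1}$, $t_is_{i+1}=t_it_{i+1}$) with identities $u\mapsto1_u\colon C_k\to C_{k+1}$ and compositions $u\ast_iv\in C_{\max(k,l)}$ for $u\in C_k$, $v\in C_l$, $k,l\ge1$, $i=\min(k,l)-1$, $t_i(u)=s_i(v)$, satisfying the axioms of strict $n$-categories for sources/targets, units (e.g. $1_{s(w)}\ast_kw=w=w\ast_k1_{t(w)}$ for $w\in C_{k+1}$), associativity and distributivity of lower- over higher-dimensional composition, but not necessarily the interchange law; prefunctors preserve all this structure. An $n$-prefunctor $F\colon C\to D$ is Conduché if for all $k_1,k_2\ge1$ with $i=\min(k_1,k_2)-1$, $k=\max(k_1,k_2)$, every $u\in C_k$ and $i$-composable $v_1\in D_{k_1}$, $v_2\in D_{k_2}$ with $F(u)=v_1\ast_iv_2$, there exist unique $i$-composable $u_1\in C_{k_1}$, $u_2\in C_{k_2}$ with $F(u_1)=v_1$, $F(u_2)=v_2$ and $u_1\ast_iu_2=u$. *)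

theory Defs
  imports Main "HOL-Library.Extended_Nat"
begin

text \<open>An n-precategory (n a natural number or omega, encoded as enat), presented
  many-sorted: cells k is the set C_k (empty for k > n); src i, tgt i : C_(i+1) -> C_i;
  ident k : C_k -> C_(k+1); comp k l u v is the composite u *_i v of u in C_k and v in C_l,
  with i = min k l - 1 (the dimensions k, l are passed explicitly since the carrier
  type is shared by all dimensions).\<close>

record 'a pcat =
  cells :: "nat \<Rightarrow> 'a set"
  src :: "nat \<Rightarrow> 'a \<Rightarrow> 'a"
  tgt :: "nat \<Rightarrow> 'a \<Rightarrow> 'a"
  ident :: "nat \<Rightarrow> 'a \<Rightarrow> 'a"
  comp :: "nat \<Rightarrow> nat \<Rightarrow> 'a \<Rightarrow> 'a \<Rightarrow> 'a"

text \<open>Iterated source/target: isrc P i d maps an (i+d)-cell to its i-source.\<close>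
fun isrc :: "'a pcat \<Rightarrow> nat \<Rightarrow> nat \<Rightarrow> 'a \<Rightarrow> 'a" where
  "isrc P i 0 u = u"
| "isrc P i (Suc d) u = src P i (isrc P (Suc i) d u)"

fun itgt :: "'a pcat \<Rightarrow> nat \<Rightarrow> nat \<Rightarrow> 'a \<Rightarrow> 'a" where
  "itgt P i 0 u = u"
| "itgt P i (Suc d) u = tgt P i (itgt P (Suc i) d u)"

definition bsrc :: "'a pcat \<Rightarrow> nat \<Rightarrow> nat \<Rightarrow> 'a \<Rightarrow> 'a" where
  "bsrc P i k u = isrc P i (k - i) u"

definition btgt :: "'a pcat \<Rightarrow> nat \<Rightarrow> nat \<Rightarrow> 'a \<Rightarrow> 'a" where
  "btgt P i k u = itgt P i (k - i) u"

definition composable :: "'a pcat \<Rightarrow> nat \<Rightarrow> nat \<Rightarrow> 'a \<Rightarrow> 'a \<Rightarrow> bool" where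
  "composable P k l u v \<longleftrightarrow> u \<in> cells P k \<and> v \<in> cells P l \<and> 1 \<le> k \<and> 1 \<le> l \<and>
     btgt P (min k l - 1) k u = bsrc P (min k l - 1) l v"

definition is_precat :: "enat \<Rightarrow> 'a pcat \<Rightarrow> bool" where
  "is_precat n P \<longleftrightarrow>
    \<comment> \<open>only cells of dimension \<le> n\<close>
    (\<forall>k. n < enat k \<longrightarrow> cells P k = {}) \<and>
    \<comment> \<open>globular set\<close>
    (\<forall>i. \<forall>x\<in>cells P (Suc i). src P i x \<in> cells P i \<and> tgt P i x \<in> cells P i) \<and>
    (\<forall>i. \<forall>x\<in>cells P (Suc (Suc i)).
        src P i (src P (Suc i) x) = src P i (tgt P (Suc i) x) \<and>
        tgt P i (src P (Suc i) x) = tgt P i (tgt P (Suc i) x)) \<and>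
    \<comment> \<open>identities\<close>
    (\<forall>k. enat k < n \<longrightarrow> (\<forall>x\<in>cells P k. ident P k x \<in> cells P (Suc k) \<and>
        src P k (ident P k x) = x \<and> tgt P k (ident P k x) = x)) \<and>
    \<comment> \<open>compositions: typing and sources/targets\<close>
    (\<forall>k l u v. composable P k l u v \<longrightarrow>
        comp P k l u v \<in> cells P (max k l) \<and>
        (k = l \<longrightarrow> src P (k - 1) (comp P k l u v) = src P (k - 1) u \<and>
                   tgt P (k - 1) (comp P k l u v) = tgt P (k - 1) v) \<and>
        (k < l \<longrightarrow> src P (l - 1) (comp P k l u v) = comp P k (l - 1) u (src P (l - 1) v) \<and>
                   tgt P (l - 1) (comp P k l u v) = comp P k (l - 1) u (tgt P (l - 1) v)) \<and>
        (l < k \<longrightarrow> src P (k - 1) (comp P k l u v) = comp P (k - 1) l (src P (k - 1) u) v \<and>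
                   tgt P (k - 1) (comp P k l u v) = comp P (k - 1) l (tgt P (k - 1) u) v)) \<and>
    \<comment> \<open>units\<close>
    (\<forall>k m w. k < m \<longrightarrow> w \<in> cells P m \<longrightarrow>
        comp P (Suc k) m (ident P k (bsrc P k m w)) w = w \<and>
        comp P m (Suc k) w (ident P k (btgt P k m w)) = w) \<and>
    \<comment> \<open>identities of composites\<close>
    (\<forall>k l u v. composable P k l u v \<longrightarrow> enat (max k l) < n \<longrightarrow>
        (k \<le> l \<longrightarrow> ident P (max k l) (comp P k l u v) = comp P k (Suc l) u (ident P l v)) \<and>
        (l \<le> k \<longrightarrow> ident P (max k l) (comp P k l u v) = comp P (Suc k) l (ident P k u) v)) \<and>
    \<comment> \<open>associativity (all three compositions along the same i)\<close>
    (\<forall>k1 k2 k3 u v w.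
        composable P k1 k2 u v \<and> composable P (max k1 k2) k3 (comp P k1 k2 u v) w \<and>
        composable P k2 k3 v w \<and> composable P k1 (max k2 k3) u (comp P k2 k3 v w) \<and>
        min (max k1 k2) k3 = min k1 k2 \<and> min k2 k3 = min k1 k2 \<and>
        min k1 (max k2 k3) = min k1 k2 \<longrightarrow>
        comp P (max k1 k2) k3 (comp P k1 k2 u v) w = comp P k1 (max k2 k3) u (comp P k2 k3 v w)) \<and>
    \<comment> \<open>distributivity of lower- over higher-dimensional composition\<close>
    (\<forall>k l l' u v w.
        min k (max l l') < min l l' \<and>
        composable P l l' v w \<and> composable P k (max l l') u (comp P l l' v w) \<and>
        composable P k l u v \<and> composable P k l' u w \<and>
        composable P (max k l) (max k l') (comp P k l u v) (comp P k l' u w) \<longrightarrow>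
        comp P k (max l l') u (comp P l l' v w) =
        comp P (max k l) (max k l') (comp P k l u v) (comp P k l' u w)) \<and>
    (\<forall>k l l' u v w.
        min k (max l l') < min l l' \<and>
        composable P l l' v w \<and> composable P (max l l') k (comp P l l' v w) u \<and>
        composable P l k v u \<and> composable P l' k w u \<and>
        composable P (max l k) (max l' k) (comp P l k v u) (comp P l' k w u) \<longrightarrow>
        comp P (max l l') k (comp P l l' v w) u =
        comp P (max l k) (max l' k) (comp P l k v u) (comp P l' k w u))"

definition is_prefunctor :: "enat \<Rightarrow> 'a pcat \<Rightarrow> 'b pcat \<Rightarrow> (nat \<Rightarrow> 'a \<Rightarrow> 'b) \<Rightarrow> bool" where
  "is_prefunctor n C D F \<longleftrightarrow>
    (\<forall>k. \<forall>x\<in>cells C k. F k x \<in> cells D k) \<and>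
    (\<forall>i. \<forall>x\<in>cells C (Suc i). F i (src C i x) = src D i (F (Suc i) x) \<and>
                               F i (tgt C i x) = tgt D i (F (Suc i) x)) \<and>
    (\<forall>k. enat k < n \<longrightarrow> (\<forall>x\<in>cells C k. F (Suc k) (ident C k x) = ident D k (F k x))) \<and>
    (\<forall>k l u v. composable C k l u v \<longrightarrow>
        F (max k l) (comp C k l u v) = comp D k l (F k u) (F l v))"

definition conduche :: "'a pcat \<Rightarrow> 'b pcat \<Rightarrow> (nat \<Rightarrow> 'a \<Rightarrow> 'b) \<Rightarrow> bool" where
  "conduche C D F \<longleftrightarrow>
    (\<forall>k1 k2 u v1 v2. u \<in> cells C (max k1 k2) \<longrightarrow> composable D k1 k2 v1 v2 \<longrightarrow>
       F (max k1 k2) u = comp D k1 k2 v1 v2 \<longrightarrow>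
       (\<exists>!p. composable C k1 k2 (fst p) (snd p) \<and> F k1 (fst p) = v1 \<and> F k2 (snd p) = v2 \<and>
             comp C k1 k2 (fst p) (snd p) = u))"

end

theory Submission
  imports Defs
begin

(* Let s and t be the k-source and k-target of u. By the unit laws u = 1_s *_k u = u *_k 1_t,
   and both factorisations lie over the factorisation 1_v = 1_v *_k 1_v in D. The uniqueness
   part of the Conduche condition identifies them, so u = 1_s; and s is the only cell with
   this property because it is recovered from 1_s as its source. *)

lemma bsrc_Suc [simp]: "bsrc P k (Suc k) x = src P k x"
  by (simp add: bsrc_def)

lemma btgt_Suc [simp]: "btgt P k (Suc k) x = tgt P k x"
  by (simp add: btgt_def)

lemma composable_Suc_Suc_iff:
  "composable P (Suc k) (Suc k) u v \<longleftrightarrow>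
     u \<in> cells P (Suc k) \<and> v \<in> cells P (Suc k) \<and> tgt P k u = src P k v"
  by (simp add: composable_def)

context
  fixes n :: enat and P :: "'a pcat"
  assumes precat: "is_precat n P"
begin

lemma precat_src_in_cells: "x \<in> cells P (Suc i) \<Longrightarrow> src P i x \<in> cells P i"
  and precat_tgt_in_cells: "x \<in> cells P (Suc i) \<Longrightarrow> tgt P i x \<in> cells P i"
  using precat by (simp_all add: is_precat_def)

lemma precat_ident_in_cells: "enat k < n \<Longrightarrow> x \<in> cells P k \<Longrightarrow> ident P k x \<in> cells P (Suc k)"
  and precat_src_ident: "enat k < n \<Longrightarrow> x \<in> cells P k \<Longrightarrow> src P k (ident P k x) = x"
  and precat_tgt_ident: "enat k < n \<Longrightarrow> x \<in> cells P k \<Longrightarrow> tgt P k (ident P k x) = x"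
  using precat by (simp_all add: is_precat_def)

lemma precat_isrc_in_cells: "x \<in> cells P (i + d) \<Longrightarrow> isrc P i d x \<in> cells P i"
  and precat_itgt_in_cells: "x \<in> cells P (i + d) \<Longrightarrow> itgt P i d x \<in> cells P i"
  by (induction d arbitrary: i)
    (simp_all add: precat_src_in_cells precat_tgt_in_cells flip: add_Suc_shift)

lemma precat_comp_in_cells: "composable P k l u v \<Longrightarrow> comp P k l u v \<in> cells P (max k l)"
  using precat by (simp add: is_precat_def)

lemma precat_left_unit:
  "k < m \<Longrightarrow> w \<in> cells P m \<Longrightarrow> comp P (Suc k) m (ident P k (bsrc P k m w)) w = w"
  and precat_right_unit:
  "k < m \<Longrightarrow> w \<in> cells P m \<Longrightarrow> comp P m (Suc k) w (ident P k (btgt P k m w)) = w"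
  using precat by (simp_all add: is_precat_def)

end

context
  fixes n :: enat and C :: "'a pcat" and D :: "'b pcat" and F :: "nat \<Rightarrow> 'a \<Rightarrow> 'b"
  assumes prefunctor: "is_prefunctor n C D F"
begin

lemma prefunctor_src: "x \<in> cells C (Suc i) \<Longrightarrow> F i (src C i x) = src D i (F (Suc i) x)"
  and prefunctor_tgt: "x \<in> cells C (Suc i) \<Longrightarrow> F i (tgt C i x) = tgt D i (F (Suc i) x)"
  using prefunctor by (simp_all add: is_prefunctor_def)

lemma prefunctor_ident: "enat k < n \<Longrightarrow> x \<in> cells C k \<Longrightarrow> F (Suc k) (ident C k x) = ident D k (F k x)"
  using prefunctor by (simp add: is_prefunctor_def)

lemma prefunctor_isrc:
  "is_precat n C \<Longrightarrow> x \<in> cells C (i + d) \<Longrightarrow> F i (isrc C i d x) = isrc D i d (F (i + d) x)"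
  and prefunctor_itgt:
  "is_precat n C \<Longrightarrow> x \<in> cells C (i + d) \<Longrightarrow> F i (itgt C i d x) = itgt D i d (F (i + d) x)"
  by (induction d arbitrary: i)
    (simp_all add: prefunctor_src prefunctor_tgt precat_isrc_in_cells precat_itgt_in_cells
      flip: add_Suc_shift)

lemma prefunctor_composable:
  assumes "is_precat n C" and "composable C k l u v"
  shows "composable D k l (F k u) (F l v)"
proof -
  let ?i = "min k l - 1"
  have "F ?i (btgt C ?i k u) = btgt D ?i k (F k u)" "F ?i (bsrc C ?i l v) = bsrc D ?i l (F l v)"
    using assms prefunctor_itgt [OF assms(1), of u ?i "k - ?i"]
      prefunctor_isrc [OF assms(1), of v ?i "l - ?i"]
    by (simp_all add: composable_def bsrc_def btgt_def)
  then show ?thesis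
    using assms(2) prefunctor by (simp add: composable_def is_prefunctor_def)
qed

lemma prefunctor_comp: "composable C k l u v \<Longrightarrow> F (max k l) (comp C k l u v) = comp D k l (F k u) (F l v)"
  using prefunctor by (simp add: is_prefunctor_def)

lemma conduche_factorisation_unique:
  assumes "is_precat n C" and "conduche C D F"
    and "composable C k1 k2 a1 a2" and "composable C k1 k2 b1 b2"
    and "F k1 a1 = F k1 b1" and "F k2 a2 = F k2 b2"
    and "comp C k1 k2 a1 a2 = comp C k1 k2 b1 b2"
  shows "a1 = b1 \<and> a2 = b2"
proof -
  let ?u = "comp C k1 k2 a1 a2"
  have "composable D k1 k2 (F k1 a1) (F k2 a2)"
    using prefunctor_composable [OF assms(1) assms(3)] .
  moreover have "?u \<in> cells C (max k1 k2)"
    using precat_comp_in_cells [OF assms(1) assms(3)] .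
  moreover have "F (max k1 k2) ?u = comp D k1 k2 (F k1 a1) (F k2 a2)"
    using prefunctor_comp [OF assms(3)] .
  ultimately have "\<exists>!p. composable C k1 k2 (fst p) (snd p) \<and> F k1 (fst p) = F k1 a1 \<and>
      F k2 (snd p) = F k2 a2 \<and> comp C k1 k2 (fst p) (snd p) = ?u"
    using assms(2) unfolding conduche_def by blast
  then have "(a1, a2) = (b1, b2)"
    using assms(3-7) by (metis fst_conv snd_conv)
  then show ?thesis by simp
qed

end

lemma conduche_cell_over_identity_is_identity:
  assumes C: "is_precat n C" and D: "is_precat n D" and F: "is_prefunctor n C D F"
    and "conduche C D F" and k: "enat k < n" and u: "u \<in> cells C (Suc k)"
    and "v \<in> cells D k" and Fu: "F (Suc k) u = ident D k v"
  shows "u = ident C k (src C k u)"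
proof -
  define s where "s = src C k u"
  define t where "t = tgt C k u"
  have s: "s \<in> cells C k" and t: "t \<in> cells C k"
    using u precat_src_in_cells [OF C] precat_tgt_in_cells [OF C] by (simp_all add: s_def t_def)
  have Fv: "F k s = v" "F k t = v"
    using Fu u prefunctor_src [OF F] prefunctor_tgt [OF F]
      precat_src_ident [OF D k \<open>v \<in> cells D k\<close>] precat_tgt_ident [OF D k \<open>v \<in> cells D k\<close>]
    by (simp_all add: s_def t_def)
  have "composable C (Suc k) (Suc k) (ident C k s) u"
    and "composable C (Suc k) (Suc k) u (ident C k t)"
    using s t u by (simp_all add: composable_Suc_Suc_iff precat_ident_in_cells [OF C k]
        precat_src_ident [OF C k] precat_tgt_ident [OF C k] s_def t_def)
  moreover have "comp C (Suc k) (Suc k) (ident C k s) u = comp C (Suc k) (Suc k) u (ident C k t)"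
    using precat_left_unit [OF C, of k "Suc k" u] precat_right_unit [OF C, of k "Suc k" u] u
    by (simp add: s_def t_def)
  moreover have "F (Suc k) (ident C k s) = F (Suc k) u" "F (Suc k) u = F (Suc k) (ident C k t)"
    using Fu Fv s t prefunctor_ident [OF F k] by simp_all
  ultimately have "ident C k s = u"
    using conduche_factorisation_unique [OF F C \<open>conduche C D F\<close>] by blast
  then show ?thesis by (simp add: s_def)
qed

theorem proposition2p6:
  fixes n :: enat and C :: "'a pcat" and D :: "'b pcat" and F :: "nat \<Rightarrow> 'a \<Rightarrow> 'b"
    and k :: nat and u :: 'a and v :: 'b
  assumes "is_precat n C" and "is_precat n D" and "is_prefunctor n C D F"
    and "conduche C D F"
    and "enat k < n" and "u \<in> cells C (Suc k)" and "v \<in> cells D k"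
    and "F (Suc k) u = ident D k v"
  shows "\<exists>!u'. u' \<in> cells C k \<and> F k u' = v \<and> u = ident C k u'"
proof (rule ex1I)
  have u_ident: "u = ident C k (src C k u)"
    using conduche_cell_over_identity_is_identity [OF assms] .
  have "F k (src C k u) = v"
    using assms(2,3,5-8) by (simp add: prefunctor_src precat_src_ident)
  then show "src C k u \<in> cells C k \<and> F k (src C k u) = v \<and> u = ident C k (src C k u)"
    using u_ident precat_src_in_cells [OF assms(1) assms(6)] by simp
next
  fix u' assume "u' \<in> cells C k \<and> F k u' = v \<and> u = ident C k u'"
  then show "u' = src C k u"
    using precat_src_ident [OF assms(1) assms(5)] by simp
qed

end
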